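(* Let $G$ be a graph of order $p$ with $1\le\delta(G)\le p-2$. If $G$ has a $\delta$-sequence $\{\mathcal G_i\}_{i=1}^s$ such that $\tilde z_i(G)=\sum_{j=2}^i\tilde y_j(G)\ge 0$ for all $2\le i\le s$, then $str(G)=p+\delta(G)$.
   Context: All graphs are finite, simple and loopless. For a graph $G$ of order $p$, a numbering of $G$ is a bijection $f:V(G)\to[1,p]$, where $[a,b]$ denotes the set of integers from $a$ to $b$. The strength of a numbering $f$ is $str_f(G)=\max\{f(u)+f(v): uv\in E(G)\}$, and the strength of a graph $G$ with at least one edge is $str(G)=\min\{str_f(G): f \text{ a numbering of } G\}$. $\delta(G)$ denotes the minimum degree. $G+H$ denotes disjoint union, $mK_1$ the edgeless graph on $m$ vertices, $K_r$ the complete graph. $\delta$-sequence: Let $G$ have order $p$ with $1\le\delta(G)\le p-2$. Set $\mathcal G_1=G_1=G$, $m_1=0$. For each $i$, write $\mathcal G_i=m_iK_1+G_i$, where $m_i\ge0$ is the number of isolated vertices of $\mathcal G_i$ and $G_i$ has no isolated vertices; put $\delta_i=\delta(G_i)$. If $\mathcal G_i$ is neither of the form $mK_1$ ($m\ge1$) nor $mK_1+K_r$ ($m\ge0$, $r\ge2$), choose a vertex $u_i$ of $G_i$ with $\deg_{G_i}(u_i)=\delta_i$ and let $\mathcal G_{i+1}$ be obtained from $G_i$ by deleting $u_i$ together with all its neighbours in $G_i$ (equivalently, from $\mathcal G_i$ by deleting its $m_i$ isolated vertices, $u_i$ and $N_{G_i}(u_i)$). Stop at the first index $s$ ($s\ge2$)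 for which $\mathcal G_s$ is $m_sK_1$ with $m_s\ge1$ (then set $\delta_s=0$) or $m_sK_1+K_r$ with $m_s\ge0$, $r\ge2$ (then $\delta_s=r-1$). The resulting $\{\mathcal G_i\}_{i=1}^s$ is a $\delta$-sequence of $G$. Define $\tilde y_j(G)=m_j+1-\delta_j$ for $1\le j\le s$ and $\tilde z_i(G)=\sum_{j=2}^i\tilde y_j(G)$. *)

theory Defs
  imports Main
begin

definition graph :: "'a set \<Rightarrow> 'a set set \<Rightarrow> bool" where
  "graph V E \<longleftrightarrow> finite V \<and> (\<forall>e\<in>E. e \<subseteq> V \<and> card e = 2)"

definition nbr :: "'a set set \<Rightarrow> 'a set \<Rightarrow> 'a \<Rightarrow> 'a set" where
  "nbr E W v = {u \<in> W. {u, v} \<in> E}"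

definition deg :: "'a set set \<Rightarrow> 'a set \<Rightarrow> 'a \<Rightarrow> nat" where
  "deg E W v = card (nbr E W v)"

definition min_deg :: "'a set set \<Rightarrow> 'a set \<Rightarrow> nat" where
  "min_deg E W = (if W = {} then 0 else Min (deg E W ` W))"

definition iso :: "'a set set \<Rightarrow> 'a set \<Rightarrow> 'a set" where
  "iso E W = {v \<in> W. deg E W v = 0}"

definition core :: "'a set set \<Rightarrow> 'a set \<Rightarrow> 'a set" where
  "core E W = W - iso E W"

definition complete_on :: "'a set set \<Rightarrow> 'a set \<Rightarrow> bool" where
  "complete_on E W \<longleftrightarrow> (\<forall>u\<in>W. \<forall>v\<in>W. u \<noteq> v \<longrightarrow> {u, v} \<in> E)"

text \<open>Terminal forms: m K_1 (m \<ge> 1) or m K_1 + K_r (r \<ge> 2).\<close>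
definition terminal :: "'a set set \<Rightarrow> 'a set \<Rightarrow> bool" where
  "terminal E W \<longleftrightarrow>
     (W \<noteq> {} \<and> core E W = {}) \<or>
     (card (core E W) \<ge> 2 \<and> complete_on E (core E W))"

text \<open>A delta-sequence, represented by the vertex sets of the induced subgraphs
  calG_1, ..., calG_s (list index j-1 corresponds to calG_j).\<close>
definition delta_seq :: "'a set \<Rightarrow> 'a set set \<Rightarrow> 'a set list \<Rightarrow> bool" where
  "delta_seq V E Ws \<longleftrightarrow>
     length Ws \<ge> 2 \<and> Ws ! 0 = V \<and>
     (\<forall>i < length Ws - 1. \<not> terminal E (Ws ! i) \<and>
        (\<exists>u \<in> core E (Ws ! i). deg E (core E (Ws ! i)) u = min_deg E (core E (Ws ! i)) \<and>
           Ws ! (i + 1) = core E (Ws ! i) - insert u (nbr E (core E (Ws ! i)) u))) \<and>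
     terminal E (Ws ! (length Ws - 1))"

text \<open>m_j and delta_j of the graph calG with vertex set W. For the terminal forms
  this gives delta = 0 (edgeless) and delta = r - 1 (K_r part), as in the paper.\<close>
definition m_of :: "'a set set \<Rightarrow> 'a set \<Rightarrow> nat" where
  "m_of E W = card (iso E W)"

definition delta_of :: "'a set set \<Rightarrow> 'a set \<Rightarrow> nat" where
  "delta_of E W = min_deg E (core E W)"

definition y_tilde :: "'a set set \<Rightarrow> 'a set list \<Rightarrow> nat \<Rightarrow> int" where
  "y_tilde E Ws j = int (m_of E (Ws ! (j - 1))) + 1 - int (delta_of E (Ws ! (j - 1)))"

definition z_tilde :: "'a set set \<Rightarrow> 'a set list \<Rightarrow> nat \<Rightarrow> int" where
  "z_tilde E Ws i = (\<Sum>j = 2..i. y_tilde E Ws j)"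

definition numbering :: "'a set \<Rightarrow> ('a \<Rightarrow> nat) \<Rightarrow> bool" where
  "numbering V f \<longleftrightarrow> bij_betw f V {1..card V}"

definition str_f :: "'a set set \<Rightarrow> ('a \<Rightarrow> nat) \<Rightarrow> nat" where
  "str_f E f = Max {f u + f v | u v. {u, v} \<in> E}"

definition strength :: "'a set \<Rightarrow> 'a set set \<Rightarrow> nat" where
  "strength V E = Min {str_f E f | f. numbering V f}"

end

theory Submission
  imports Defs
begin

text \<open>
  Lower bound: the vertex labelled p has at least \<delta> neighbours, whose labels are
  distinct and positive, so one of them is at least \<delta>.

  Upper bound: say that W has excess D if it has a numbering whose edge sums are all at
  most |W| + D. A terminal graph m K_1 + K_r has excess r - 1 - m (label the clique
  first), which is at most 1 - y(W). For a non-terminal step, label the neighbourhood N of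
  the minimum-degree vertex u first, then the next graph W' of the sequence, then u, then
  the isolated vertices: edges meeting N have sum at most |N| + |core|, and edges inside
  W' are shifted by 2|N|. Hence W has excess D as soon as D \<ge> 1 - y(W) and W' has excess
  D + y(W). Running backwards along the sequence, G has excess D whenever
  D \<ge> 1 - (y_1 + ... + y_i) = \<delta> - z_i for all i; nonnegativity of the z_i gives D = \<delta>.
\<close>

lemma numbering_finite: "numbering A g \<Longrightarrow> finite A"
  unfolding numbering_def using bij_betw_finite by blast

lemma numbering_exists: "finite A \<Longrightarrow> \<exists>g. numbering A g"
  unfolding numbering_def using finite_same_card_bij[of A "{1..card A}"] by auto

lemma numbering_range:
  assumes "numbering A g" "x \<in> A"
  shows "1 \<le> g x" "g x \<le> card A"
  using assms bij_betwE unfolding numbering_def by fastforce+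

lemma numbering_distinct_sum_le:
  assumes "numbering A g" "x \<in> A" "y \<in> A" "x \<noteq> y"
  shows "g x + g y + 1 \<le> 2 * card A"
proof -
  have "g x \<noteq> g y"
    using assms unfolding numbering_def bij_betw_def inj_on_def by blast
  with numbering_range[OF assms(1,2)] numbering_range[OF assms(1,3)] show ?thesis by linarith
qed

lemma numbering_Un:
  assumes g: "numbering A g" and h: "numbering B h" and disj: "A \<inter> B = {}"
  shows "numbering (A \<union> B) (\<lambda>x. if x \<in> A then g x else card A + h x)" (is "numbering _ ?g")
proof -
  have fin: "finite A" "finite B" using g h numbering_finite by blast+
  have "bij_betw ((+) (card A)) {1..card B} {card A + 1..card A + card B}"
    by (simp add: bij_betw_def inj_on_def image_add_atLeastAtMost)
  then have "bij_betw (\<lambda>x. card A + h x) B {card A + 1..card A + card B}"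
    using bij_betw_trans h unfolding numbering_def comp_def by blast
  then have "bij_betw ?g B {card A + 1..card A + card B}"
    by (subst bij_betw_cong[where g = "\<lambda>x. card A + h x"]) (use disj in auto)
  moreover have "bij_betw ?g A {1..card A}"
    using g unfolding numbering_def by (subst bij_betw_cong[where g = g]) auto
  ultimately have "bij_betw ?g (A \<union> B) ({1..card A} \<union> {card A + 1..card A + card B})"
    using disj by (intro bij_betw_combine) auto
  moreover have "{1..card A} \<union> {card A + 1..card A + card B} = {1..card (A \<union> B)}"
    using fin disj by (auto simp: card_Un_disjoint)
  ultimately show ?thesis unfolding numbering_def by simp
qed

lemma inj_on_ex_ge_card:
  fixes f :: "'a \<Rightarrow> nat"
  assumes "finite A" "A \<noteq> {}" "inj_on f A" "0 \<notin> f ` A"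
  shows "\<exists>x\<in>A. card A \<le> f x"
proof -
  define m where "m = Max (f ` A)"
  have "m \<in> f ` A" unfolding m_def using assms(1,2) by simp
  moreover have "f ` A \<subseteq> {1..m}"
    using assms(1,4) by (auto simp: m_def Suc_le_eq intro: Max_ge gr0I)
  then have "card (f ` A) \<le> card {1..m}" by (rule card_mono[OF finite_atLeastAtMost])
  then have "card A \<le> m" using assms(3) by (simp add: card_image)
  ultimately show ?thesis by blast
qed

lemma edge_distinct:
  assumes "graph V E" "{x, y} \<in> E"
  shows "x \<noteq> y"
proof
  assume "x = y"
  then have "card {x, y} = 1" by simp
  with assms show False unfolding graph_def by fastforce
qed

lemma edge_in_vertices: "graph V E \<Longrightarrow> {x, y} \<in> E \<Longrightarrow> x \<in> V \<and> y \<in> V"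
  unfolding graph_def by blast

lemma nbr_subset: "nbr E W v \<subseteq> W"
  by (auto simp: nbr_def)

lemma min_deg_le: "finite W \<Longrightarrow> v \<in> W \<Longrightarrow> min_deg E W \<le> deg E W v"
  unfolding min_deg_def by auto

lemma min_deg_complete:
  assumes "finite C" "C \<noteq> {}" "complete_on E C"
  shows "card C - 1 \<le> min_deg E C"
proof -
  have "card C - 1 \<le> deg E C v" if v: "v \<in> C" for v
  proof -
    have "C - {v} \<subseteq> nbr E C v"
    proof
      fix w assume "w \<in> C - {v}"
      with assms(3) v have "{w, v} \<in> E" unfolding complete_on_def by blast
      with \<open>w \<in> C - {v}\<close> show "w \<in> nbr E C v" by (simp add: nbr_def)
    qed
    then have "card (C - {v}) \<le> card (nbr E C v)"
      by (rule card_mono[OF finite_subset[OF nbr_subset assms(1)]])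
    then show ?thesis using v assms(1) by (simp add: deg_def)
  qed
  then have "card C - 1 \<le> Min (deg E C ` C)"
    using assms(1,2) by (intro Min.boundedI) auto
  then show ?thesis using assms(2) by (simp add: min_deg_def)
qed

lemma iso_no_edge:
  assumes "finite W" "x \<in> iso E W" "y \<in> W"
  shows "{x, y} \<notin> E"
proof
  assume "{x, y} \<in> E"
  then have "y \<in> nbr E W x" using assms(3) by (simp add: nbr_def insert_commute)
  moreover have "finite (nbr E W x)" using assms(1) nbr_subset finite_subset by metis
  ultimately show False using assms(2) by (auto simp: iso_def deg_def)
qed

lemma edge_in_core:
  assumes "finite W" "x \<in> W" "y \<in> W" "{x, y} \<in> E"
  shows "x \<in> core E W" "y \<in> core E W"
proof -
  have "{y, x} \<in> E" using assms(4) by (simp add: insert_commute)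
  then have "x \<notin> iso E W" "y \<notin> iso E W"
    using iso_no_edge[OF assms(1) _ assms(3)] iso_no_edge[OF assms(1) _ assms(2)] assms(4) by blast+
  then show "x \<in> core E W" "y \<in> core E W" using assms(2,3) by (simp_all add: core_def)
qed

lemma card_core_iso:
  assumes "finite W"
  shows "card W = card (core E W) + card (iso E W)"
proof -
  have "iso E W \<subseteq> W" by (auto simp: iso_def)
  with assms have "card (iso E W) \<le> card W" by (rule card_mono)
  with \<open>iso E W \<subseteq> W\<close> assms show ?thesis
    by (simp add: core_def card_Diff_subset finite_subset)
qed

lemma delta_seq_subset:
  assumes "delta_seq V E Ws" "k < length Ws"
  shows "Ws ! k \<subseteq> V"
  using assms(2)
proof (induction k)
  case 0
  then show ?case using assms(1) by (simp add: delta_seq_def)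
next
  case (Suc k)
  then have "k < length Ws - 1" by simp
  then obtain u where "Ws ! Suc k = core E (Ws ! k) - insert u (nbr E (core E (Ws ! k)) u)"
    using assms(1) unfolding delta_seq_def by auto
  then show ?case using Suc by (auto simp: core_def)
qed

definition y_of :: "'a set set \<Rightarrow> 'a set \<Rightarrow> int" where
  "y_of E W = int (m_of E W) + 1 - int (delta_of E W)"

lemma z_tilde_Suc: "z_tilde E Ws (Suc i) = (\<Sum>j = 1..i. y_of E (Ws ! j))"
  unfolding z_tilde_def numeral_2_eq_2 sum.shift_bounds_cl_Suc_ivl
  by (simp add: y_tilde_def y_of_def)

definition has_numbering_excess :: "'a set set \<Rightarrow> 'a set \<Rightarrow> int \<Rightarrow> bool" where
  "has_numbering_excess E W D \<longleftrightarrow>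
     (\<exists>g. numbering W g \<and>
        (\<forall>x\<in>W. \<forall>y\<in>W. {x, y} \<in> E \<longrightarrow> int (g x + g y) \<le> int (card W) + D))"

lemma has_numbering_excess_mono:
  "has_numbering_excess E W D \<Longrightarrow> D \<le> D' \<Longrightarrow> has_numbering_excess E W D'"
  unfolding has_numbering_excess_def by fastforce

lemma has_numbering_excess_core:
  assumes G: "graph V E" and WV: "W \<subseteq> V"
  shows "has_numbering_excess E W (int (card (core E W)) - 1 - int (card (iso E W)))"
proof -
  define C I where "C = core E W" and "I = iso E W"
  have fW: "finite W" using G WV finite_subset unfolding graph_def by blast
  have CI: "C \<union> I = W" "C \<inter> I = {}" by (auto simp: C_def I_def core_def iso_def)
  obtain hC hI where "numbering C hC" "numbering I hI"
    using fW CI numbering_exists by (metis finite_Un)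
  from numbering_Un[OF this CI(2)]
  have g: "numbering W (\<lambda>x. if x \<in> C then hC x else card C + hI x)" (is "numbering W ?g")
    using CI(1) by simp
  have "int (?g x + ?g y) \<le> int (card W) + (int (card C) - 1 - int (card I))"
    if "x \<in> W" "y \<in> W" "{x, y} \<in> E" for x y
  proof -
    have "x \<in> C" "y \<in> C" using edge_in_core[OF fW that] by (simp_all add: C_def)
    then have "?g x + ?g y + 1 \<le> 2 * card C"
      using numbering_distinct_sum_le \<open>numbering C hC\<close> edge_distinct[OF G that(3)] by simp
    then show ?thesis using card_core_iso[OF fW, of E] by (simp add: C_def I_def)
  qed
  with g show ?thesis unfolding has_numbering_excess_def C_def I_def by blast
qed

lemma has_numbering_excess_terminal:
  assumes G: "graph V E" and WV: "W \<subseteq> V"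
    and W_terminal: "terminal E W" and slack: "1 - y_of E W \<le> D"
  shows "has_numbering_excess E W D"
proof (rule has_numbering_excess_mono[OF has_numbering_excess_core[OF G WV]])
  define C where "C = core E W"
  have fC: "finite C" using G WV finite_subset unfolding graph_def C_def core_def by blast
  have "int (card C) - 1 \<le> int (delta_of E W)"
  proof (cases "C = {}")
    case False
    then have "complete_on E C" using W_terminal unfolding terminal_def C_def by auto
    with min_deg_complete[OF fC False] have "card C - 1 \<le> delta_of E W"
      by (simp add: delta_of_def C_def)
    moreover have "1 \<le> card C" using fC False by (simp add: Suc_le_eq card_gt_0_iff)
    ultimately show ?thesis by linarith
  qed simp
  then show "int (card (core E W)) - 1 - int (card (iso E W)) \<le> D"
    using slack by (simp add: y_of_def m_of_def C_def)
qed

lemma has_numbering_excess_step: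
  assumes G: "graph V E" and WV: "W \<subseteq> V"
    and u: "u \<in> core E W" "deg E (core E W) u = min_deg E (core E W)"
    and slack: "1 - y_of E W \<le> D"
    and rest: "has_numbering_excess E (core E W - insert u (nbr E (core E W) u)) (D + y_of E W)"
  shows "has_numbering_excess E W D"
proof -
  define C I N where "C = core E W" and "I = iso E W" and "N = nbr E C u"
  define W' where "W' = C - insert u N"
  have fW: "finite W" using G WV finite_subset unfolding graph_def by blast
  have uN: "u \<notin> N" using edge_distinct[OF G, of u u] by (auto simp: N_def nbr_def)
  have C_split: "(N \<union> W') \<union> {u} = C" "C \<union> I = W"
    using u(1) nbr_subset[of E C u] by (auto simp: C_def I_def N_def W'_def core_def iso_def)
  have disj: "N \<inter> W' = {}" "(N \<union> W') \<inter> {u} = {}" "C \<inter> I = {}"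
    using uN by (auto simp: W'_def C_def I_def core_def iso_def)
  have fin: "finite N" "finite W'" "finite I"
    using fW unfolding C_split(2)[symmetric] C_split(1)[symmetric] by simp_all
  have "card (N \<union> W') = card N + card W'" using fin(1,2) disj(1) by (rule card_Un_disjoint)
  then have card_C: "card C = card N + card W' + 1"
    using card_Un_disjoint[of "N \<union> W'" "{u}"] fin disj(2) C_split(1) by simp
  have card_W: "card W = card N + card W' + 1 + card I"
    using card_core_iso[OF fW, of E] card_C by (simp add: C_def I_def)
  have y: "y_of E W = int (card I) + 1 - int (card N)"
    using u(2) by (simp add: y_of_def m_of_def delta_of_def deg_def C_def I_def N_def)
  obtain g' where g': "numbering W' g'"
    "\<And>x y. x \<in> W' \<Longrightarrow> y \<in> W' \<Longrightarrow> {x, y} \<in> E \<Longrightarrow>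
       int (g' x + g' y) \<le> int (card W') + (D + y_of E W)"
    using rest unfolding has_numbering_excess_def W'_def N_def C_def by auto
  obtain hN hI where hN: "numbering N hN" and hI: "numbering I hI"
    using fin numbering_exists by metis
  define g1 where "g1 = (\<lambda>x. if x \<in> N then hN x else card N + g' x)"
  define g2 where "g2 = (\<lambda>x. if x \<in> N \<union> W' then g1 x else card (N \<union> W') + 1)"
  define g where "g = (\<lambda>x. if x \<in> C then g2 x else card C + hI x)"
  have num_g1: "numbering (N \<union> W') g1"
    unfolding g1_def by (rule numbering_Un[OF hN g'(1) disj(1)])
  have "numbering {u} (\<lambda>_. 1)" by (simp add: numbering_def)
  from numbering_Un[OF num_g1 this disj(2)] have num_g2: "numbering C g2"
    unfolding g2_def C_split(1) .
  from numbering_Un[OF num_g2 hI disj(3)] have num_g: "numbering W g"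
    unfolding g_def C_split(2) .
  have near_N: "int (g x + g y) \<le> int (card W) + D" if "x \<in> N" "y \<in> C" for x y
  proof -
    have "g x \<le> card N" using numbering_range(2)[OF hN that(1)] that(1) C_split(1)
      by (auto simp: g_def g2_def g1_def)
    moreover have "g y \<le> card C" using numbering_range(2)[OF num_g2 that(2)] that(2)
      by (simp add: g_def)
    ultimately show ?thesis using slack card_C card_W y by linarith
  qed
  have "int (g x + g y) \<le> int (card W) + D" if xy: "x \<in> W" "y \<in> W" "{x, y} \<in> E" for x y
  proof -
    have "x \<in> C" "y \<in> C" using edge_in_core[OF fW xy] by (simp_all add: C_def)
    show ?thesis
    proof (cases "x \<in> N \<or> y \<in> N")
      case True
      then show ?thesis using near_N \<open>x \<in> C\<close> \<open>y \<in> C\<close> by (metis add.commute)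
    next
      case False
      then have "x \<noteq> u" "y \<noteq> u"
        using xy(3) \<open>x \<in> C\<close> \<open>y \<in> C\<close> by (auto simp: N_def nbr_def insert_commute)
      then have "x \<in> W'" "y \<in> W'" using False \<open>x \<in> C\<close> \<open>y \<in> C\<close> by (auto simp: W'_def)
      then have "g x = card N + g' x" "g y = card N + g' y"
        using False C_split(1) by (auto simp: g_def g2_def g1_def)
      then show ?thesis using g'(2)[OF \<open>x \<in> W'\<close> \<open>y \<in> W'\<close> xy(3)] card_W y by simp
    qed
  qed
  with num_g show ?thesis unfolding has_numbering_excess_def by blast
qed

lemma delta_seq_has_numbering_excess:
  assumes G: "graph V E" and ds: "delta_seq V E Ws" and k: "k < length Ws"
    and slack: "\<forall>i\<in>{k..<length Ws}. 1 - (\<Sum>j = k..i. y_of E (Ws ! j)) \<le> D"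
  shows "has_numbering_excess E (Ws ! k) D"
proof -
  have "k \<le> length Ws - 1" using k by simp
  then show ?thesis using slack
  proof (induction k arbitrary: D rule: inc_induct)
    case base
    have "terminal E (Ws ! (length Ws - 1))" using ds by (simp add: delta_seq_def)
    moreover have "1 - y_of E (Ws ! (length Ws - 1)) \<le> D"
      using bspec[OF base.prems, of "length Ws - 1"] k by simp
    moreover have "length Ws - 1 < length Ws" using k by simp
    ultimately show ?case using has_numbering_excess_terminal[OF G delta_seq_subset[OF ds]] by simp
  next
    case (step k)
    have "k < length Ws - 1" using step.hyps by simp
    then obtain u where u: "u \<in> core E (Ws ! k)"
      "deg E (core E (Ws ! k)) u = min_deg E (core E (Ws ! k))"
      "Ws ! Suc k = core E (Ws ! k) - insert u (nbr E (core E (Ws ! k)) u)"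
      using ds unfolding delta_seq_def by auto
    have "has_numbering_excess E (Ws ! Suc k) (D + y_of E (Ws ! k))"
    proof (rule step.IH, intro ballI)
      fix i assume i: "i \<in> {Suc k..<length Ws}"
      then have "(\<Sum>j = k..i. y_of E (Ws ! j)) = y_of E (Ws ! k) + (\<Sum>j = Suc k..i. y_of E (Ws ! j))"
        by (intro sum.atLeast_Suc_atMost) simp
      moreover have "1 - (\<Sum>j = k..i. y_of E (Ws ! j)) \<le> D" using step.prems i by simp
      ultimately show "1 - (\<Sum>j = Suc k..i. y_of E (Ws ! j)) \<le> D + y_of E (Ws ! k)" by simp
    qed
    moreover have "1 - y_of E (Ws ! k) \<le> D" using step.prems step.hyps by force
    ultimately show ?case
      using has_numbering_excess_step[OF G delta_seq_subset[OF ds] u(1,2)] u(3) step.hyps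
      by simp
  qed
qed

lemma finite_edge_sums: "graph V E \<Longrightarrow> finite {f u + f v | u v. {u, v} \<in> E}"
proof -
  assume G: "graph V E"
  have "{f u + f v | u v. {u, v} \<in> E} \<subseteq> (\<lambda>(u, v). f u + f v) ` (V \<times> V)"
    using edge_in_vertices[OF G] by fastforce
  moreover have "finite V" using G by (simp add: graph_def)
  ultimately show ?thesis using finite_subset by blast
qed

lemma str_f_ge: "graph V E \<Longrightarrow> {u, v} \<in> E \<Longrightarrow> f u + f v \<le> str_f E f"
  unfolding str_f_def by (rule Max_ge[OF finite_edge_sums]) auto

lemma str_f_le:
  assumes G: "graph V E" and "E \<noteq> {}" and bound: "\<And>u v. {u, v} \<in> E \<Longrightarrow> f u + f v \<le> s"
  shows "str_f E f \<le> s"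
proof -
  obtain e where "e \<in> E" using assms(2) by blast
  then obtain u v where "{u, v} \<in> E" using G unfolding graph_def by (metis card_2_iff)
  then have "{f u + f v | u v. {u, v} \<in> E} \<noteq> {}" by blast
  then show ?thesis
    unfolding str_f_def by (rule Max.boundedI[OF finite_edge_sums[OF G]]) (auto simp: bound)
qed

lemma str_f_lower_bound:
  assumes G: "graph V E" and f: "numbering V f" and "V \<noteq> {}" and "1 \<le> min_deg E V"
  shows "card V + min_deg E V \<le> str_f E f"
proof -
  have fV: "finite V" using G by (simp add: graph_def)
  then have "card V \<in> {1..card V}" using assms(3) by (simp add: Suc_le_eq card_gt_0_iff)
  then obtain v where v: "v \<in> V" "f v = card V"
    using f unfolding numbering_def by (metis bij_betw_iff_bijections)
  define N where "N = nbr E V v"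
  have NV: "N \<subseteq> V" by (simp add: N_def nbr_subset)
  have "min_deg E V \<le> card N" using min_deg_le[OF fV v(1)] by (simp add: deg_def N_def)
  moreover have "finite N" using fV NV finite_subset by blast
  moreover have "inj_on f N" using f NV unfolding numbering_def bij_betw_def by (metis inj_on_subset)
  moreover have "0 \<notin> f ` N" using numbering_range(1)[OF f] NV by fastforce
  ultimately obtain w where "w \<in> N" "min_deg E V \<le> f w"
    using inj_on_ex_ge_card[of N f] assms(4) by fastforce
  moreover have "f w + f v \<le> str_f E f"
    using \<open>w \<in> N\<close> by (intro str_f_ge[OF G]) (simp add: N_def nbr_def)
  ultimately show ?thesis using v(2) by simp
qed

lemma strength_eqI:
  assumes G: "graph V E" and E: "E \<noteq> {}" and g: "numbering V g" "str_f E g = s"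
    and lower: "\<And>f. numbering V f \<Longrightarrow> s \<le> str_f E f"
  shows "strength V E = s"
proof -
  have "str_f E f \<le> 2 * card V" if "numbering V f" for f
    using str_f_le[OF G E] numbering_range(2)[OF that] edge_in_vertices[OF G] by (metis add_mono mult_2)
  then have "{str_f E f | f. numbering V f} \<subseteq> {..2 * card V}" by auto
  then have "finite {str_f E f | f. numbering V f}" using finite_subset by blast
  then show ?thesis unfolding strength_def using g lower by (intro Min_eqI) auto
qed

lemma iso_eq_empty_if_min_deg_pos:
  assumes "finite V" "1 \<le> min_deg E V"
  shows "iso E V = {}"
proof -
  have "deg E V v \<noteq> 0" if "v \<in> V" for v
    using min_deg_le[OF assms(1) that, of E] assms(2) by linarith
  then show ?thesis by (auto simp: iso_def)
qed

lemma edges_nonempty_if_min_deg_pos: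
  assumes "finite V" "V \<noteq> {}" "1 \<le> min_deg E V"
  shows "E \<noteq> {}"
proof -
  obtain v where "v \<in> V" using assms(2) by blast
  then have "nbr E V v \<noteq> {}" using min_deg_le[OF assms(1), of v E] assms(3) by (auto simp: deg_def)
  then show ?thesis by (auto simp: nbr_def)
qed

lemma strength_eq_card_plus_min_deg:
  assumes G: "graph V E" and V: "V \<noteq> {}" and \<delta>: "1 \<le> min_deg E V"
    and excess: "has_numbering_excess E V (int (min_deg E V))"
  shows "strength V E = card V + min_deg E V"
proof -
  have E: "E \<noteq> {}"
    using edges_nonempty_if_min_deg_pos[OF _ V \<delta>] G by (simp add: graph_def)
  obtain g where g: "numbering V g"
    "\<And>x y. x \<in> V \<Longrightarrow> y \<in> V \<Longrightarrow> {x, y} \<in> E \<Longrightarrow> g x + g y \<le> card V + min_deg E V"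
    using excess unfolding has_numbering_excess_def by force
  have "str_f E g = card V + min_deg E V"
    using str_f_le[OF G E] g edge_in_vertices[OF G] str_f_lower_bound[OF G g(1) V \<delta>]
    by (metis le_antisym)
  then show ?thesis using strength_eqI[OF G E g(1)] str_f_lower_bound[OF G _ V \<delta>] by simp
qed

lemma delta_seq_has_numbering_excess_min_deg:
  assumes G: "graph V E" and ds: "delta_seq V E Ws" and \<delta>: "1 \<le> min_deg E V"
    and z_nonneg: "\<forall>i \<in> {2..length Ws}. z_tilde E Ws i \<ge> 0"
  shows "has_numbering_excess E V (int (min_deg E V))"
proof -
  have "iso E V = {}" using iso_eq_empty_if_min_deg_pos[OF _ \<delta>] G by (simp add: graph_def)
  then have y_V: "y_of E V = 1 - int (min_deg E V)"
    by (simp add: y_of_def m_of_def delta_of_def core_def)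
  have Ws0: "0 < length Ws" "Ws ! 0 = V" using ds by (auto simp: delta_seq_def)
  have "1 - (\<Sum>j = 0..i. y_of E (Ws ! j)) \<le> int (min_deg E V)" if "i < length Ws" for i
  proof -
    have "(\<Sum>j = 0..i. y_of E (Ws ! j)) = y_of E V + z_tilde E Ws (Suc i)"
      using Ws0 by (simp add: z_tilde_Suc sum.atLeast_Suc_atMost)
    moreover have "z_tilde E Ws (Suc i) \<ge> 0"
    proof (cases "i = 0")
      case False
      then have "Suc i \<in> {2..length Ws}" using that by auto
      with z_nonneg show ?thesis by blast
    qed (simp add: z_tilde_def)
    ultimately show ?thesis using y_V by simp
  qed
  then show ?thesis using delta_seq_has_numbering_excess[OF G ds Ws0(1)] Ws0(2) by simp
qed

theorem mainTheorem2:
  fixes V :: "'a set" and E :: "'a set set" and Ws :: "'a set list"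
  assumes "graph V E"
    and "1 \<le> min_deg E V" and "min_deg E V + 2 \<le> card V"
    and "delta_seq V E Ws"
    and "\<forall>i \<in> {2..length Ws}. z_tilde E Ws i \<ge> 0"
  shows "strength V E = card V + min_deg E V"
proof (rule strength_eq_card_plus_min_deg[OF assms(1) _ assms(2)])
  show "V \<noteq> {}" using assms(3) by auto
  show "has_numbering_excess E V (int (min_deg E V))"
    using delta_seq_has_numbering_excess_min_deg[OF assms(1,4,2,5)] .
qed

end
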